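(* Let $f:[0,1]\to\mathbb{R}$ with $f(0),f(1)\in\mathbb{Z}$ and let $n\in\mathbb{N}_+$. If $n\ge 3$, let also $\tilde\varphi_n:[0,1]\to\mathbb{R}$ satisfy \[ \tilde\varphi_n\left(\frac{k+1}{n}\right)-\tilde\varphi_n\left(\frac{k}{n}\right)\ge \frac12\left(\binom{n}{k}^{-1}+\binom{n}{k+1}^{-1}\right),\quad k=1,\dots,n-2. \] (a) If $f$ is monotone increasing on $[0,1/n]$ and on $[1-1/n,1]$, and (when $n\ge 3$) $f(x)-\tilde\varphi_n(x)$ is monotone increasing on $[1/n,1-1/n]$, then $\widehat{B}_n(f)$ is monotone increasing on $[0,1]$. (b) If $f$ is monotone decreasing on $[0,1/n]$ and on $[1-1/n,1]$, and (when $n\ge3$) $f(x)+\tilde\varphi_n(x)$ is monotone decreasing on $[1/n,1-1/n]$, then $\widehat{B}_n(f)$ is monotone decreasing on $[0,1]$.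
   Context: For $n\in\mathbb{N}_+$ and $f:[0,1]\to\mathbb{R}$, $\widehat{B}_n(f)(x):=\sum_{k=0}^n \left\langle f\left(\frac{k}{n}\right)\binom{n}{k}\right\rangle x^k(1-x)^{n-k}$, where $\langle\alpha\rangle$ is the integer nearest to $\alpha$ (when $\alpha$ is a half-integer, $\langle\alpha\rangle$ may be either neighbouring integer, chosen arbitrarily; the result holds for any such choice). Monotone increasing/decreasing are meant in the non-strict sense. *)

theory Defs
  imports Complex_Main
begin

definition nearest_int_rounding :: "(real \<Rightarrow> int) \<Rightarrow> bool" where
  "nearest_int_rounding r \<longleftrightarrow> (\<forall>\<alpha>. \<bar>real_of_int (r \<alpha>) - \<alpha>\<bar> \<le> 1/2)"

definition Bhat :: "(real \<Rightarrow> int) \<Rightarrow> nat \<Rightarrow> (real \<Rightarrow> real) \<Rightarrow> real \<Rightarrow> real" where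
  "Bhat r n f x = (\<Sum>k=0..n. real_of_int (r (f (real k / real n) * real (n choose k)))
                     * x ^ k * (1 - x) ^ (n - k))"

end

theory Submission
  imports Defs "HOL-Analysis.Weierstrass_Theorems"
begin

(* B_n^(f) is the Bernstein polynomial with coefficients a_k = <f(k/n) C(n,k)> / C(n,k), and by the
   recurrence B_{n+1}(a) = (1 - x) B_n(a) + x B_n(a o Suc) a Bernstein polynomial with increasing
   coefficients is increasing on [0,1]; so it suffices to show a_k <= a_{k+1}.
   At the two ends C(n,1) = C(n,n-1) = n, and n f(0), n f(1) are integers which rounding cannot cross,
   so monotonicity of f on [0,1/n] and [1-1/n,1] survives the rounding.  In between,
   |a_k - f(k/n)| <= 1/(2 C(n,k)), and the assumed growth of phi absorbs both rounding errors.
   Part (b) is part (a) for -f and the reflected rounding alpha |-> -<-alpha>. *)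

definition bernstein_poly :: "nat \<Rightarrow> (nat \<Rightarrow> real) \<Rightarrow> real \<Rightarrow> real" where
  "bernstein_poly n a x = (\<Sum>k\<le>n. a k * Bernstein n k x)"

lemma Bernstein_Suc_0: "Bernstein (Suc n) 0 x = (1 - x) * Bernstein n 0 x"
  by (simp add: Bernstein_def)

lemma Bernstein_Suc_Suc:
  "Bernstein (Suc n) (Suc k) x = x * Bernstein n k x + (1 - x) * Bernstein n (Suc k) x"
proof (cases "k < n")
  case True
  then have "n - k = Suc (n - Suc k)" by simp
  then show ?thesis by (simp add: Bernstein_def algebra_simps)
next
  case False
  then show ?thesis by (cases "k = n") (simp_all add: Bernstein_def binomial_eq_0)
qed

lemma bernstein_poly_Suc:
  "bernstein_poly (Suc n) a x = (1 - x) * bernstein_poly n a x + x * bernstein_poly n (\<lambda>k. a (Suc k)) x"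
proof -
  let ?tail = "\<Sum>k\<le>n. a (Suc k) * Bernstein n (Suc k) x"
  have "bernstein_poly (Suc n) a x = a 0 * Bernstein (Suc n) 0 x + (\<Sum>k\<le>n. a (Suc k) * Bernstein (Suc n) (Suc k) x)"
    unfolding bernstein_poly_def by (rule sum.atMost_Suc_shift)
  also have "(\<Sum>k\<le>n. a (Suc k) * Bernstein (Suc n) (Suc k) x)
      = (1 - x) * ?tail + x * bernstein_poly n (\<lambda>k. a (Suc k)) x"
    unfolding bernstein_poly_def Bernstein_Suc_Suc sum_distrib_left sum.distrib[symmetric]
    by (rule sum.cong) (simp_all add: algebra_simps)
  also have "a 0 * Bernstein (Suc n) 0 x + ((1 - x) * ?tail + x * bernstein_poly n (\<lambda>k. a (Suc k)) x)
      = (1 - x) * (\<Sum>k\<le>Suc n. a k * Bernstein n k x) + x * bernstein_poly n (\<lambda>k. a (Suc k)) x"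
    by (simp only: sum.atMost_Suc_shift Bernstein_Suc_0) (simp add: algebra_simps)
  also have "(\<Sum>k\<le>Suc n. a k * Bernstein n k x) = bernstein_poly n a x"
    by (simp add: bernstein_poly_def Bernstein_def)
  finally show ?thesis .
qed

lemma bernstein_poly_mono_coeffs:
  assumes "\<And>k. k \<le> n \<Longrightarrow> a k \<le> b k" and "0 \<le> x" "x \<le> 1"
  shows "bernstein_poly n a x \<le> bernstein_poly n b x"
  unfolding bernstein_poly_def using assms by (intro sum_mono mult_right_mono Bernstein_nonneg) auto

lemma mono_on_bernstein_poly:
  assumes "\<And>k. k < n \<Longrightarrow> a k \<le> a (Suc k)"
  shows "mono_on {0..1} (bernstein_poly n a)"
  using assms
proof (induction n arbitrary: a)
  case 0
  then show ?case by (simp add: bernstein_poly_def Bernstein_def mono_on_def)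
next
  case (Suc n)
  let ?a' = "\<lambda>k. a (Suc k)"
  have mono_a: "mono_on {0..1} (bernstein_poly n a)"
    and mono_a': "mono_on {0..1} (bernstein_poly n ?a')"
    using Suc by simp_all
  show ?case
  proof (rule mono_onI)
    fix x y :: real assume xy: "x \<in> {0..1}" "y \<in> {0..1}" "x \<le> y"
    have "bernstein_poly n a x \<le> bernstein_poly n a y"
      using mono_a xy by (rule mono_onD)
    moreover have "bernstein_poly n ?a' x \<le> bernstein_poly n ?a' y"
      using mono_a' xy by (rule mono_onD)
    moreover have "bernstein_poly n a x \<le> bernstein_poly n ?a' x"
      using Suc.prems xy by (intro bernstein_poly_mono_coeffs) auto
    ultimately have "0 \<le> (1 - y) * (bernstein_poly n a y - bernstein_poly n a x)
        + y * (bernstein_poly n ?a' y - bernstein_poly n ?a' x)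
        + (y - x) * (bernstein_poly n ?a' x - bernstein_poly n a x)"
      using xy by (intro add_nonneg_nonneg mult_nonneg_nonneg) auto
    then show "bernstein_poly (Suc n) a x \<le> bernstein_poly (Suc n) a y"
      by (simp add: bernstein_poly_Suc algebra_simps)
  qed
qed

lemma nearest_int_rounding_Ints:
  assumes "nearest_int_rounding r" and "\<alpha> \<in> \<int>"
  shows "of_int (r \<alpha>) = \<alpha>"
proof -
  obtain m where m: "\<alpha> = of_int m" using assms(2) Ints_cases by blast
  have "\<bar>of_int (r \<alpha>) - \<alpha>\<bar> \<le> 1/2" using assms(1) by (simp add: nearest_int_rounding_def)
  then have "r \<alpha> = m" unfolding m by linarith
  then show ?thesis using m by simp
qed

lemma nearest_int_rounding_ge:
  assumes "nearest_int_rounding r" and "of_int m \<le> \<alpha>"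
  shows "m \<le> r \<alpha>"
proof -
  have "\<bar>of_int (r \<alpha>) - \<alpha>\<bar> \<le> 1/2" using assms(1) by (simp add: nearest_int_rounding_def)
  then show ?thesis using assms(2) by linarith
qed

lemma nearest_int_rounding_le:
  assumes "nearest_int_rounding r" and "\<alpha> \<le> of_int m"
  shows "r \<alpha> \<le> m"
proof -
  have "\<bar>of_int (r \<alpha>) - \<alpha>\<bar> \<le> 1/2" using assms(1) by (simp add: nearest_int_rounding_def)
  then show ?thesis using assms(2) by linarith
qed

lemma nearest_int_rounding_reflect:
  assumes "nearest_int_rounding r"
  shows "nearest_int_rounding (\<lambda>\<alpha>. - r (- \<alpha>))"
  unfolding nearest_int_rounding_def
proof
  fix \<alpha> :: real
  have "\<bar>of_int (r (- \<alpha>)) - (- \<alpha>)\<bar> \<le> 1/2" using assms unfolding nearest_int_rounding_def by blast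
  then show "\<bar>of_int (- r (- \<alpha>)) - \<alpha>\<bar> \<le> 1/2" by linarith
qed

lemma mono_on_uminus_iff:
  fixes g :: "'a::order \<Rightarrow> 'b::ordered_ab_group_add"
  shows "mono_on S (\<lambda>x. - g x) \<longleftrightarrow> antimono_on S g"
  by (auto simp: monotone_on_def)

lemma grid_point_in_inner_interval:
  assumes "1 \<le> k" and "k < n"
  shows "real k / real n \<in> {1 / real n..1 - 1 / real n}"
proof -
  have n: "real n > 0" using assms by simp
  have "1 / real n \<le> real k / real n" using assms n by (simp add: divide_right_mono)
  moreover have "real k + 1 \<le> real n" using assms by linarith
  then have "real k / real n \<le> 1 - 1 / real n" using n by (simp add: field_simps)
  ultimately show ?thesis by simp
qed

definition Bhat_coeff :: "(real \<Rightarrow> int) \<Rightarrow> nat \<Rightarrow> (real \<Rightarrow> real) \<Rightarrow> nat \<Rightarrow> real" where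
  "Bhat_coeff r n f k = of_int (r (f (real k / real n) * real (n choose k))) / real (n choose k)"

lemma Bhat_eq_bernstein_poly: "Bhat r n f = bernstein_poly n (Bhat_coeff r n f)"
proof
  fix x
  show "Bhat r n f x = bernstein_poly n (Bhat_coeff r n f) x"
    unfolding Bhat_def bernstein_poly_def Bernstein_def Bhat_coeff_def atLeast0AtMost
    by (rule sum.cong) auto
qed

lemma Bhat_reflect: "Bhat (\<lambda>\<alpha>. - r (- \<alpha>)) n (\<lambda>x. - f x) = (\<lambda>x. - Bhat r n f x)"
  unfolding Bhat_def sum_negf[symmetric] by (intro ext sum.cong) simp_all

lemma Bhat_coeff_0: "nearest_int_rounding r \<Longrightarrow> f 0 \<in> \<int> \<Longrightarrow> Bhat_coeff r n f 0 = f 0"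
  by (simp add: Bhat_coeff_def nearest_int_rounding_Ints)

lemma Bhat_coeff_self:
  "nearest_int_rounding r \<Longrightarrow> f 1 \<in> \<int> \<Longrightarrow> n \<ge> 1 \<Longrightarrow> Bhat_coeff r n f n = f 1"
  by (simp add: Bhat_coeff_def nearest_int_rounding_Ints)

lemma Bhat_coeff_approx:
  assumes "nearest_int_rounding r" and "k \<le> n"
  shows "\<bar>Bhat_coeff r n f k - f (real k / real n)\<bar> \<le> 1 / (2 * real (n choose k))"
proof -
  define C where "C = real (n choose k)"
  have C: "C > 0" using assms(2) by (simp add: C_def)
  let ?y = "f (real k / real n) * C"
  have "Bhat_coeff r n f k - f (real k / real n) = (of_int (r ?y) - ?y) / C"
    using C by (simp add: Bhat_coeff_def C_def[symmetric] field_simps)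
  then have "\<bar>Bhat_coeff r n f k - f (real k / real n)\<bar> = \<bar>of_int (r ?y) - ?y\<bar> / C"
    using C by simp
  also have "\<dots> \<le> (1/2) / C"
    using assms(1) C by (intro divide_right_mono) (simp_all add: nearest_int_rounding_def)
  finally show ?thesis by (simp add: C_def)
qed

lemma Bhat_coeff_1_ge:
  assumes r: "nearest_int_rounding r" and "f 0 \<in> \<int>" and n: "n \<ge> 1"
    and "f 0 \<le> f (1 / real n)"
  shows "f 0 \<le> Bhat_coeff r n f 1"
proof -
  obtain m where m: "f 0 = of_int m" using \<open>f 0 \<in> \<int>\<close> Ints_cases by blast
  let ?y = "f (real 1 / real n) * real (n choose 1)"
  have "of_int (m * int n) \<le> ?y"
    using assms(4) m by (simp add: mult_right_mono)
  then have "m * int n \<le> r ?y"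
    by (rule nearest_int_rounding_ge[OF r])
  then have "of_int (m * int n) \<le> (of_int (r ?y) :: real)"
    by (simp only: of_int_le_iff)
  then show ?thesis using n m unfolding Bhat_coeff_def by (simp add: pos_le_divide_eq)
qed

lemma Bhat_coeff_pred_le:
  assumes r: "nearest_int_rounding r" and "f 1 \<in> \<int>" and n: "n \<ge> 1"
    and "f (1 - 1 / real n) \<le> f 1"
  shows "Bhat_coeff r n f (n - 1) \<le> f 1"
proof -
  obtain m where m: "f 1 = of_int m" using \<open>f 1 \<in> \<int>\<close> Ints_cases by blast
  have choose: "n choose (n - 1) = n"
    using n by (metis binomial_symmetric choose_one diff_le_self diff_diff_cancel)
  have pt: "real (n - 1) / real n = 1 - 1 / real n"
    using n by (simp add: of_nat_diff diff_divide_distrib)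
  let ?y = "f (real (n - 1) / real n) * real (n choose (n - 1))"
  have "?y \<le> of_int (m * int n)"
    using assms(4) m unfolding choose pt by (simp add: mult_right_mono)
  then have "r ?y \<le> m * int n"
    by (rule nearest_int_rounding_le[OF r])
  then have "(of_int (r ?y) :: real) \<le> of_int (m * int n)"
    by (simp only: of_int_le_iff)
  then show ?thesis using n m unfolding Bhat_coeff_def choose by (simp add: pos_divide_le_eq)
qed

lemma Bhat_coeff_step:
  assumes r: "nearest_int_rounding r" and "Suc k \<le> n"
    and "\<phi> (real (k + 1) / real n) - \<phi> (real k / real n)
           \<ge> 1/2 * (1 / real (n choose k) + 1 / real (n choose (k + 1)))"
    and "f (real k / real n) - \<phi> (real k / real n) \<le> f (real (k + 1) / real n) - \<phi> (real (k + 1) / real n)"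
  shows "Bhat_coeff r n f k \<le> Bhat_coeff r n f (Suc k)"
proof -
  have "\<bar>Bhat_coeff r n f k - f (real k / real n)\<bar> \<le> 1 / (2 * real (n choose k))"
    using assms(2) by (intro Bhat_coeff_approx[OF r]) simp
  moreover have "\<bar>Bhat_coeff r n f (k + 1) - f (real (k + 1) / real n)\<bar> \<le> 1 / (2 * real (n choose (k + 1)))"
    using assms(2) by (intro Bhat_coeff_approx[OF r]) simp
  moreover have "1/2 * (1 / real (n choose k) + 1 / real (n choose (k + 1)))
      = 1 / (2 * real (n choose k)) + 1 / (2 * real (n choose (k + 1)))"
    by simp
  ultimately show ?thesis using assms(3,4) unfolding Suc_eq_plus1 by linarith
qed

lemma mono_on_Bhat:
  fixes f \<phi> :: "real \<Rightarrow> real"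
  assumes r: "nearest_int_rounding r"
    and f0: "f 0 \<in> \<int>" and f1: "f 1 \<in> \<int>"
    and n: "n \<ge> 1"
    and phi: "n \<ge> 3 \<Longrightarrow> \<forall>k\<in>{1..n-2}.
       \<phi> (real (k+1) / real n) - \<phi> (real k / real n)
         \<ge> 1/2 * (1 / real (n choose k) + 1 / real (n choose (k+1)))"
    and mono_left: "mono_on {0..1/real n} f" and mono_right: "mono_on {1 - 1/real n..1} f"
    and mono_inner: "n \<ge> 3 \<Longrightarrow> mono_on {1/real n..1 - 1/real n} (\<lambda>x. f x - \<phi> x)"
  shows "mono_on {0..1} (Bhat r n f)"
proof -
  have "Bhat_coeff r n f k \<le> Bhat_coeff r n f (Suc k)" if k: "k < n" for k
  proof -
    consider "k = 0" | "Suc k = n" | "1 \<le> k" "k + 2 \<le> n" using k by linarith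
    then show ?thesis
    proof cases
      case 1
      have "f 0 \<le> f (1 / real n)" using n by (intro mono_onD[OF mono_left]) simp_all
      then have "f 0 \<le> Bhat_coeff r n f 1" by (rule Bhat_coeff_1_ge[where f = f, OF r f0 n])
      then show ?thesis using 1 Bhat_coeff_0[where f = f, OF r f0] by simp
    next
      case 2
      have "1 / real n \<le> 1" using n by simp
      then have "f (1 - 1 / real n) \<le> f 1" by (intro mono_onD[OF mono_right]) simp_all
      then have "Bhat_coeff r n f (n - 1) \<le> f 1" by (rule Bhat_coeff_pred_le[where f = f, OF r f1 n])
      moreover have "k = n - 1" using 2 by simp
      ultimately show ?thesis using 2 Bhat_coeff_self[where f = f, OF r f1 n] by simp
    next
      case 3
      then have n3: "n \<ge> 3" and "k \<in> {1..n-2}" by auto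
      then have "\<phi> (real (k + 1) / real n) - \<phi> (real k / real n)
          \<ge> 1/2 * (1 / real (n choose k) + 1 / real (n choose (k + 1)))"
        using phi by blast
      moreover have "f (real k / real n) - \<phi> (real k / real n)
          \<le> f (real (k + 1) / real n) - \<phi> (real (k + 1) / real n)"
      proof (rule mono_onD[OF mono_inner[OF n3]])
        show "real k / real n \<in> {1 / real n..1 - 1 / real n}"
          using 3 by (intro grid_point_in_inner_interval) simp_all
        show "real (k + 1) / real n \<in> {1 / real n..1 - 1 / real n}"
          using 3 by (intro grid_point_in_inner_interval) simp_all
        show "real k / real n \<le> real (k + 1) / real n"
          by (simp add: divide_right_mono)
      qed
      ultimately show ?thesis using k by (intro Bhat_coeff_step[OF r]) simp_all
    qed
  qed
  then show ?thesis unfolding Bhat_eq_bernstein_poly by (rule mono_on_bernstein_poly)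
qed

theorem proposition2p9:
  fixes f \<phi> :: "real \<Rightarrow> real" and n :: nat and r :: "real \<Rightarrow> int"
  assumes r: "nearest_int_rounding r"
    and f0: "f 0 \<in> \<int>" and f1: "f 1 \<in> \<int>"
    and n: "n \<ge> 1"
    and phi: "n \<ge> 3 \<Longrightarrow> \<forall>k\<in>{1..n-2}.
       \<phi> (real (k+1) / real n) - \<phi> (real k / real n)
         \<ge> 1/2 * (1 / real (n choose k) + 1 / real (n choose (k+1)))"
  shows "(mono_on {0..1/real n} f \<and> mono_on {1 - 1/real n..1} f \<and>
           (n \<ge> 3 \<longrightarrow> mono_on {1/real n..1 - 1/real n} (\<lambda>x. f x - \<phi> x))
          \<longrightarrow> mono_on {0..1} (Bhat r n f))
       \<and> (antimono_on {0..1/real n} f \<and> antimono_on {1 - 1/real n..1} f \<and>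
           (n \<ge> 3 \<longrightarrow> antimono_on {1/real n..1 - 1/real n} (\<lambda>x. f x + \<phi> x))
          \<longrightarrow> antimono_on {0..1} (Bhat r n f))"
proof (intro conjI impI)
  assume "mono_on {0..1/real n} f \<and> mono_on {1 - 1/real n..1} f \<and>
    (n \<ge> 3 \<longrightarrow> mono_on {1/real n..1 - 1/real n} (\<lambda>x. f x - \<phi> x))"
  then show "mono_on {0..1} (Bhat r n f)"
    by (intro mono_on_Bhat[OF r f0 f1 n phi]) auto
next
  assume "antimono_on {0..1/real n} f \<and> antimono_on {1 - 1/real n..1} f \<and>
    (n \<ge> 3 \<longrightarrow> antimono_on {1/real n..1 - 1/real n} (\<lambda>x. f x + \<phi> x))"
  then have "mono_on {0..1} (Bhat (\<lambda>\<alpha>. - r (- \<alpha>)) n (\<lambda>x. - f x))"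
    using f0 f1 by (intro mono_on_Bhat[OF nearest_int_rounding_reflect[OF r] _ _ n phi])
      (auto simp flip: mono_on_uminus_iff)
  then show "antimono_on {0..1} (Bhat r n f)"
    by (simp add: Bhat_reflect mono_on_uminus_iff)
qed

end
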